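(* Let $D$ be an instance all of whose tuples are endogenous, let $\mathcal{Q}$ be a monotone query, and let $\bar a\in\mathcal{Q}(D)$. Then for $D'\subseteq D$, we have $(D,D',\bar a)\in\mathcal{MSSEP}^{c}(\mathcal{Q})$ if and only if there is $t\in D\smallsetminus D'$ such that $t\in\mathcal{MRC}(D,\mathcal{Q}(\bar a))$, $\Lambda:=D\smallsetminus(D'\cup\{t\})\in\mathit{Cont}(D,\mathcal{Q}(\bar a),t)$, and there is no $\Lambda'\in\mathit{Cont}(D,\mathcal{Q}(\bar a),t)$ with $|\Lambda'|<|\Lambda|$.
   Context: A query $\mathcal{Q}$ is monotone if $D_1\subseteq D_2$ implies $\mathcal{Q}(D_1)\subseteq\mathcal{Q}(D_2)$; $D\models\mathcal{Q}(\bar a)$ means $\bar a\in\mathcal{Q}(D)$. Here $D^n=D$. A tuple $\tau\in D^n$ is an actual cause for $\bar a$ if there is $\Gamma\subseteq D^n$ (contingency set) with $D\smallsetminus\Gamma\models\mathcal{Q}(\bar a)$ and $D\smallsetminus(\Gamma\cup\{\tau\})\not\models\mathcal{Q}(\bar a)$. $\mathit{Cont}(D,\mathcal{Q}(\bar a),\tau)$ is the set of subset-minimal such contingency sets $\Lambda\subseteq D^n$ (i.e. $D\smallsetminus\Lambda\models\mathcal{Q}(\bar a)$, $D\smallsetminus(\Lambda\cup\{\tau\})\not\models\mathcal{Q}(\bar a)$, and $D\smallsetminus(\Lambda'\cup\{\tau\})\models\mathcal{Q}(\bar a)$ for all $\Lambda'\subsetneq\Lambda$). The responsibility of an actual cause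 $\tau$ is $1/(|\Gamma|+1)$ with $\Gamma$ a minimum-size contingency set for $\tau$ (and $0$ for non-causes); $\mathcal{MRC}(D,\mathcal{Q}(\bar a))$ is the set of actual causes for $\bar a$ with maximum responsibility. $\mathcal{MSSEP}^{c}(\mathcal{Q})$ is the set of triples $(D,D',\bar a)$ with $\bar a\in\mathcal{Q}(D)$, $D'\subseteq D$, $\bar a\notin\mathcal{Q}(D')$, and $D'$ of maximum cardinality among subsets of $D$ with this last property (minimum source-side-effect). *)

theory Defs
  imports Main "HOL-Library.Extended_Real"
begin

text \<open>Instances are finite sets of tuples of type 'a; a query maps an instance
 to its set of answers of type 'b. All tuples are endogenous, so D^n = D.\<close>

definition monotone_query :: "('a set \<Rightarrow> 'b set) \<Rightarrow> bool" where
  "monotone_query Q \<longleftrightarrow> (\<forall>D1 D2. D1 \<subseteq> D2 \<longrightarrow> Q D1 \<subseteq> Q D2)"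

definition is_contingency :: "('a set \<Rightarrow> 'b set) \<Rightarrow> 'a set \<Rightarrow> 'b \<Rightarrow> 'a \<Rightarrow> 'a set \<Rightarrow> bool" where
  "is_contingency Q D a \<tau> \<Gamma> \<longleftrightarrow>
     \<Gamma> \<subseteq> D \<and> a \<in> Q (D - \<Gamma>) \<and> a \<notin> Q (D - (\<Gamma> \<union> {\<tau>}))"

definition actual_cause :: "('a set \<Rightarrow> 'b set) \<Rightarrow> 'a set \<Rightarrow> 'b \<Rightarrow> 'a \<Rightarrow> bool" where
  "actual_cause Q D a \<tau> \<longleftrightarrow> \<tau> \<in> D \<and> (\<exists>\<Gamma>. is_contingency Q D a \<tau> \<Gamma>)"

definition Cont :: "('a set \<Rightarrow> 'b set) \<Rightarrow> 'a set \<Rightarrow> 'b \<Rightarrow> 'a \<Rightarrow> 'a set set" where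
  "Cont Q D a \<tau> = {\<Lambda>. \<Lambda> \<subseteq> D \<and> a \<in> Q (D - \<Lambda>) \<and> a \<notin> Q (D - (\<Lambda> \<union> {\<tau>})) \<and>
      (\<forall>\<Lambda>'. \<Lambda>' \<subset> \<Lambda> \<longrightarrow> a \<in> Q (D - (\<Lambda>' \<union> {\<tau>})))}"

definition responsibility :: "('a set \<Rightarrow> 'b set) \<Rightarrow> 'a set \<Rightarrow> 'b \<Rightarrow> 'a \<Rightarrow> real" where
  "responsibility Q D a \<tau> =
     (if actual_cause Q D a \<tau>
      then 1 / (real (LEAST n. \<exists>\<Gamma>. is_contingency Q D a \<tau> \<Gamma> \<and> card \<Gamma> = n) + 1)
      else 0)"

definition MRC :: "('a set \<Rightarrow> 'b set) \<Rightarrow> 'a set \<Rightarrow> 'b \<Rightarrow> 'a set" where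
  "MRC Q D a = {\<tau>. actual_cause Q D a \<tau> \<and>
      (\<forall>\<tau>'. actual_cause Q D a \<tau>' \<longrightarrow> responsibility Q D a \<tau>' \<le> responsibility Q D a \<tau>)}"

definition MSSEP :: "('a set \<Rightarrow> 'b set) \<Rightarrow> ('a set \<times> 'a set \<times> 'b) set" where
  "MSSEP Q = {(D, D', a). a \<in> Q D \<and> D' \<subseteq> D \<and> a \<notin> Q D' \<and>
      (\<forall>D''. D'' \<subseteq> D \<and> a \<notin> Q D'' \<longrightarrow> card D'' \<le> card D')}"

end

theory Submission
  imports Defs
begin

text \<open>Call X \<subseteq> D bad if a \<notin> Q X, so (D, D', a) \<in> MSSEP Q says that D' is a bad set of
  maximum size. For every contingency \<Gamma> of \<tau> the set D - (\<Gamma> \<union> {\<tau>}) is bad, hence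
  |D| \<le> |\<Gamma>| + 1 + |D'|. Conversely, for \<tau> \<in> D - D' the set D - (D' \<union> {\<tau>}) is a contingency
  attaining this bound, because insert \<tau> D' is too large to be bad. So the most responsible causes
  are exactly those whose minimum contingency has size |D| - |D'| - 1, and by monotonicity a
  contingency of minimum size is subset-minimal, i.e. lies in Cont.\<close>

definition min_contingency_card :: "('a set \<Rightarrow> 'b set) \<Rightarrow> 'a set \<Rightarrow> 'b \<Rightarrow> 'a \<Rightarrow> nat" where
  "min_contingency_card Q D a \<tau> = (LEAST n. \<exists>\<Gamma>. is_contingency Q D a \<tau> \<Gamma> \<and> card \<Gamma> = n)"

lemma min_contingency_card_le:
  assumes "is_contingency Q D a \<tau> \<Gamma>"
  shows "min_contingency_card Q D a \<tau> \<le> card \<Gamma>"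
  unfolding min_contingency_card_def using assms by (intro Least_le) blast

lemma ex_min_contingency:
  assumes "actual_cause Q D a \<tau>"
  obtains \<Gamma> where "is_contingency Q D a \<tau> \<Gamma>" "card \<Gamma> = min_contingency_card Q D a \<tau>"
proof -
  from assms have "\<exists>n \<Gamma>. is_contingency Q D a \<tau> \<Gamma> \<and> card \<Gamma> = n"
    unfolding actual_cause_def by blast
  from LeastI_ex[OF this] show ?thesis
    using that unfolding min_contingency_card_def by blast
qed

lemma responsibility_actual_cause:
  assumes "actual_cause Q D a \<tau>"
  shows "responsibility Q D a \<tau> = 1 / (real (min_contingency_card Q D a \<tau>) + 1)"
  using assms unfolding responsibility_def min_contingency_card_def by simp

lemma MRC_iff_min_contingency_card:
  "\<tau> \<in> MRC Q D a \<longleftrightarrow> actual_cause Q D a \<tau> \<and>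
     (\<forall>\<tau>'. actual_cause Q D a \<tau>' \<longrightarrow> min_contingency_card Q D a \<tau> \<le> min_contingency_card Q D a \<tau>')"
  by (auto simp: MRC_def responsibility_actual_cause simp flip: inverse_eq_divide)

lemma Cont_imp_contingency:
  assumes "\<Lambda> \<in> Cont Q D a \<tau>"
  shows "is_contingency Q D a \<tau> \<Lambda>"
  using assms unfolding Cont_def is_contingency_def by blast

lemma minimum_contingency_in_Cont:
  assumes "finite D" and "monotone_query Q"
    and \<Gamma>: "is_contingency Q D a \<tau> \<Gamma>"
    and minimum: "\<And>\<Gamma>'. is_contingency Q D a \<tau> \<Gamma>' \<Longrightarrow> card \<Gamma> \<le> card \<Gamma>'"
  shows "\<Gamma> \<in> Cont Q D a \<tau>"
  unfolding Cont_def
proof (intro CollectI conjI allI impI)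
  show "\<Gamma> \<subseteq> D" "a \<in> Q (D - \<Gamma>)" "a \<notin> Q (D - (\<Gamma> \<union> {\<tau>}))"
    using \<Gamma> unfolding is_contingency_def by auto
  fix \<Lambda>' assume "\<Lambda>' \<subset> \<Gamma>"
  have "D - \<Gamma> \<subseteq> D - \<Lambda>'"
    using \<open>\<Lambda>' \<subset> \<Gamma>\<close> by blast
  then have "a \<in> Q (D - \<Lambda>')"
    using \<open>a \<in> Q (D - \<Gamma>)\<close> assms(2) unfolding monotone_query_def by blast
  have "card \<Lambda>' < card \<Gamma>"
    using \<open>\<Lambda>' \<subset> \<Gamma>\<close> \<open>\<Gamma> \<subseteq> D\<close> assms(1) by (meson finite_subset psubset_card_mono)
  then have "\<not> is_contingency Q D a \<tau> \<Lambda>'"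
    using minimum not_le by blast
  moreover have "\<Lambda>' \<subseteq> D"
    using \<open>\<Lambda>' \<subset> \<Gamma>\<close> \<open>\<Gamma> \<subseteq> D\<close> by blast
  ultimately show "a \<in> Q (D - (\<Lambda>' \<union> {\<tau>}))"
    using \<open>a \<in> Q (D - \<Lambda>')\<close> unfolding is_contingency_def by blast
qed

lemma card_Diff_insert_complement:
  assumes "finite D" and "F \<subseteq> D" and "\<tau> \<in> D - F"
  shows "card (D - (F \<union> {\<tau>})) + 1 + card F = card D"
proof -
  have "finite F"
    using assms(1,2) finite_subset by blast
  have "card (D - (F \<union> {\<tau>})) = card (D - F) - 1"
    using assms by (simp add: card_Diff_singleton flip: Diff_insert)
  moreover have "card (D - F) = card D - card F"
    using \<open>finite F\<close> assms(2) by (rule card_Diff_subset)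
  moreover have "card (D - F) > 0"
    using assms by (auto simp: card_gt_0_iff)
  moreover have "card F \<le> card D"
    using assms(1,2) card_mono by blast
  ultimately show ?thesis
    by linarith
qed

lemma MSSEPD:
  assumes "(D, F, a) \<in> MSSEP Q"
  shows "a \<in> Q D" and "F \<subseteq> D" and "a \<notin> Q F"
    and "\<And>X. X \<subseteq> D \<Longrightarrow> a \<notin> Q X \<Longrightarrow> card X \<le> card F"
  using assms unfolding MSSEP_def by auto

lemma MSSEP_complement_nonempty:
  assumes "(D, F, a) \<in> MSSEP Q"
  obtains \<tau> where "\<tau> \<in> D - F"
proof -
  have "F \<noteq> D"
    using MSSEPD(1,3)[OF assms] by blast
  then show ?thesis
    using MSSEPD(2)[OF assms] that by blast
qed

lemma MSSEP_exists:
  assumes "finite D" and "a \<in> Q D" and "E \<subseteq> D" and "a \<notin> Q E"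
  shows "\<exists>F. (D, F, a) \<in> MSSEP Q"
proof -
  let ?bad = "\<lambda>X. X \<subseteq> D \<and> a \<notin> Q X"
  have "\<exists>F. ?bad F \<and> (\<forall>X. ?bad X \<longrightarrow> card X \<le> card F)"
    using assms(1,3,4) card_mono[OF assms(1)]
    by (intro ex_has_greatest_nat[of ?bad E card "card D + 1"]) (auto simp: less_Suc_eq_le)
  then show ?thesis
    using assms(2) unfolding MSSEP_def by blast
qed

lemma card_contingency_lower_bound:
  assumes "finite D" and "(D, F, a) \<in> MSSEP Q" and "is_contingency Q D a \<tau> \<Gamma>"
  shows "card D \<le> card \<Gamma> + 1 + card F"
proof -
  let ?X = "\<Gamma> \<union> {\<tau>}"
  have "\<Gamma> \<subseteq> D" and "a \<notin> Q (D - ?X)"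
    using assms(3) unfolding is_contingency_def by auto
  then have "card (D - ?X) \<le> card F"
    using MSSEPD(4)[OF assms(2)] by blast
  moreover have "card D = card (D - ?X) + card (D \<inter> ?X)"
    using card_Int_Diff[OF assms(1), of ?X] by simp
  moreover have "card (D \<inter> ?X) \<le> card ?X"
    using \<open>\<Gamma> \<subseteq> D\<close> assms(1) by (intro card_mono) (auto intro: finite_subset)
  moreover have "card ?X \<le> card \<Gamma> + 1"
    using card_Un_le[of \<Gamma> "{\<tau>}"] by simp
  ultimately show ?thesis
    by linarith
qed

lemma contingency_outside_MSSEP:
  assumes "finite D" and "(D, F, a) \<in> MSSEP Q" and "\<tau> \<in> D - F"
  shows "is_contingency Q D a \<tau> (D - (F \<union> {\<tau>}))"
proof -
  note F = MSSEPD(2-4)[OF assms(2)]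
  have "D - (D - (F \<union> {\<tau>})) = insert \<tau> F" and "D - ((D - (F \<union> {\<tau>})) \<union> {\<tau>}) = F"
    using F(1) assms(3) by auto
  moreover have "a \<in> Q (insert \<tau> F)"
  proof (rule ccontr)
    assume "a \<notin> Q (insert \<tau> F)"
    then have "card (insert \<tau> F) \<le> card F"
      using F(1,3) assms(3) by blast
    moreover have "finite F"
      using assms(1) F(1) finite_subset by blast
    ultimately show False
      using assms(3) by simp
  qed
  ultimately show ?thesis
    using F(2) unfolding is_contingency_def by auto
qed

lemma min_contingency_card_lower_bound:
  assumes "finite D" and "(D, F, a) \<in> MSSEP Q" and "actual_cause Q D a \<tau>"
  shows "card D \<le> min_contingency_card Q D a \<tau> + 1 + card F"
proof -
  obtain \<Gamma> where "is_contingency Q D a \<tau> \<Gamma>" "card \<Gamma> = min_contingency_card Q D a \<tau>"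
    using assms(3) by (rule ex_min_contingency)
  then show ?thesis
    using card_contingency_lower_bound[OF assms(1,2)] by metis
qed

lemma min_contingency_card_outside_MSSEP:
  assumes "finite D" and "(D, F, a) \<in> MSSEP Q" and "\<tau> \<in> D - F"
  shows "actual_cause Q D a \<tau>" and "min_contingency_card Q D a \<tau> + 1 + card F = card D"
proof -
  have \<Gamma>: "is_contingency Q D a \<tau> (D - (F \<union> {\<tau>}))"
    using contingency_outside_MSSEP[OF assms] .
  then show "actual_cause Q D a \<tau>"
    using assms(3) unfolding actual_cause_def by blast
  have "card (D - (F \<union> {\<tau>})) + 1 + card F = card D"
    using card_Diff_insert_complement[OF assms(1) MSSEPD(2)[OF assms(2)] assms(3)] .
  then show "min_contingency_card Q D a \<tau> + 1 + card F = card D"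
    using min_contingency_card_le[OF \<Gamma>] min_contingency_card_lower_bound[OF assms(1,2) \<open>actual_cause Q D a \<tau>\<close>]
    by linarith
qed

lemma MRC_min_contingency_card:
  assumes "finite D" and "(D, F, a) \<in> MSSEP Q" and "t \<in> MRC Q D a"
  shows "min_contingency_card Q D a t + 1 + card F = card D"
proof -
  obtain \<tau> where "\<tau> \<in> D - F"
    using assms(2) by (rule MSSEP_complement_nonempty)
  note \<tau> = min_contingency_card_outside_MSSEP[OF assms(1,2) this]
  have "min_contingency_card Q D a t \<le> min_contingency_card Q D a \<tau>"
    using assms(3) \<tau>(1) unfolding MRC_iff_min_contingency_card by blast
  moreover have "actual_cause Q D a t"
    using assms(3) unfolding MRC_iff_min_contingency_card by blast
  ultimately show ?thesis
    using \<tau>(2) min_contingency_card_lower_bound[OF assms(1,2)] by (metis add_right_mono le_antisym)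
qed

lemma MSSEP_imp_minimum_Cont_of_MRC:
  assumes "finite D" and "monotone_query Q" and M: "(D, D', a) \<in> MSSEP Q" and t: "t \<in> D - D'"
  shows "t \<in> MRC Q D a" and "D - (D' \<union> {t}) \<in> Cont Q D a t"
    and "\<And>\<Lambda>'. \<Lambda>' \<in> Cont Q D a t \<Longrightarrow> card (D - (D' \<union> {t})) \<le> card \<Lambda>'"
proof -
  let ?L = "D - (D' \<union> {t})"
  have card_L: "card ?L + 1 + card D' = card D"
    using card_Diff_insert_complement[OF assms(1) MSSEPD(2)[OF M] t] .
  have L_minimum: "card ?L \<le> card \<Gamma>" if "is_contingency Q D a t \<Gamma>" for \<Gamma>
    using card_contingency_lower_bound[OF assms(1) M that] card_L by linarith
  show "t \<in> MRC Q D a"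
    using min_contingency_card_outside_MSSEP[OF assms(1) M t]
      min_contingency_card_lower_bound[OF assms(1) M]
    unfolding MRC_iff_min_contingency_card by fastforce
  show "?L \<in> Cont Q D a t"
    using minimum_contingency_in_Cont[OF assms(1,2) contingency_outside_MSSEP[OF assms(1) M t]] L_minimum .
  show "card ?L \<le> card \<Lambda>'" if "\<Lambda>' \<in> Cont Q D a t" for \<Lambda>'
    using L_minimum[OF Cont_imp_contingency[OF that]] .
qed

lemma minimum_Cont_of_MRC_imp_MSSEP:
  assumes "finite D" and "monotone_query Q" and "a \<in> Q D" and "D' \<subseteq> D" and t: "t \<in> D - D'"
    and MRC: "t \<in> MRC Q D a" and L: "D - (D' \<union> {t}) \<in> Cont Q D a t"
    and L_minimum: "\<And>\<Lambda>'. \<Lambda>' \<in> Cont Q D a t \<Longrightarrow> card (D - (D' \<union> {t})) \<le> card \<Lambda>'"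
  shows "(D, D', a) \<in> MSSEP Q"
proof -
  have "D - ((D - (D' \<union> {t})) \<union> {t}) = D'"
    using assms(4) t by auto
  then have bad: "a \<notin> Q D'"
    using Cont_imp_contingency[OF L] unfolding is_contingency_def by simp
  then obtain F where F: "(D, F, a) \<in> MSSEP Q"
    using MSSEP_exists[OF assms(1,3,4) bad] by blast
  have "actual_cause Q D a t"
    using MRC by (simp add: MRC_iff_min_contingency_card)
  then obtain \<Gamma> where \<Gamma>: "is_contingency Q D a t \<Gamma>" "card \<Gamma> = min_contingency_card Q D a t"
    by (rule ex_min_contingency)
  have "\<Gamma> \<in> Cont Q D a t"
    by (rule minimum_contingency_in_Cont[OF assms(1,2) \<Gamma>(1)]) (simp add: \<Gamma>(2) min_contingency_card_le)
  then have "card (D - (D' \<union> {t})) \<le> min_contingency_card Q D a t"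
    using L_minimum \<Gamma>(2) by metis
  then have "card F \<le> card D'"
    using MRC_min_contingency_card[OF assms(1) F MRC] card_Diff_insert_complement[OF assms(1,4) t]
    by linarith
  then have "card X \<le> card D'" if "X \<subseteq> D" and "a \<notin> Q X" for X
    using MSSEPD(4)[OF F that] by linarith
  then show ?thesis
    using assms(3,4) bad unfolding MSSEP_def by blast
qed

theorem proposition8:
  fixes Q :: "'a set \<Rightarrow> 'b set" and D D' :: "'a set" and a :: 'b
  assumes "finite D"
    and "monotone_query Q"
    and "a \<in> Q D"
    and "D' \<subseteq> D"
  shows "(D, D', a) \<in> MSSEP Q \<longleftrightarrow>
    (\<exists>t \<in> D - D'. t \<in> MRC Q D a \<and>
       D - (D' \<union> {t}) \<in> Cont Q D a t \<and>
       \<not> (\<exists>\<Lambda>' \<in> Cont Q D a t. card \<Lambda>' < card (D - (D' \<union> {t}))))"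
proof
  assume M: "(D, D', a) \<in> MSSEP Q"
  then obtain t where t: "t \<in> D - D'"
    by (rule MSSEP_complement_nonempty)
  then show "\<exists>t \<in> D - D'. t \<in> MRC Q D a \<and> D - (D' \<union> {t}) \<in> Cont Q D a t \<and>
       \<not> (\<exists>\<Lambda>' \<in> Cont Q D a t. card \<Lambda>' < card (D - (D' \<union> {t})))"
    using MSSEP_imp_minimum_Cont_of_MRC[OF assms(1,2) M t] by (meson not_le)
next
  assume "\<exists>t \<in> D - D'. t \<in> MRC Q D a \<and> D - (D' \<union> {t}) \<in> Cont Q D a t \<and>
       \<not> (\<exists>\<Lambda>' \<in> Cont Q D a t. card \<Lambda>' < card (D - (D' \<union> {t})))"
  then obtain t where "t \<in> D - D'" "t \<in> MRC Q D a" "D - (D' \<union> {t}) \<in> Cont Q D a t"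
    and "\<And>\<Lambda>'. \<Lambda>' \<in> Cont Q D a t \<Longrightarrow> card (D - (D' \<union> {t})) \<le> card \<Lambda>'"
    by (meson not_le)
  then show "(D, D', a) \<in> MSSEP Q"
    by (rule minimum_Cont_of_MRC_imp_MSSEP[OF assms])
qed

end
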